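(* Let $|\psi\rangle\in(\mathbb{C}^d)^{\otimes n}$ be a normalized state such that every element of the stabilizer of $|\psi\rangle^{\otimes 2}$ is unitary. Let $g_1,g_2$ be local invertible operators, $g_k=\bigotimes_{i=1}^n g_k^{(i)}$ with $g_k^{(i)}\in\mathrm{GL}(d,\mathbb{C})$. Then $$p^{\mathrm{SEP}}_{\max}\!\left(g_1|\psi\rangle\otimes g_2|\psi\rangle\mapsto|\psi\rangle^{\otimes 2}\right)=p^{\mathrm{SEP}}_{\max}\!\left(g_1|\psi\rangle\mapsto|\psi\rangle\right)\,p^{\mathrm{SEP}}_{\max}\!\left(g_2|\psi\rangle\mapsto|\psi\rangle\right),$$ where initial states are normalized.
   Context: The two-copy states are regarded as $n$-partite states in which party $i$ holds subsystem $i$ of both copies (local dimension $d^2$). The stabilizer of $|\psi\rangle^{\otimes 2}$ is the set of $S=\bigotimes_i S^{(i)}$ with $S^{(i)}\in\mathrm{GL}(d^2,\mathbb{C})$ and $S|\psi\rangle^{\otimes 2}=|\psi\rangle^{\otimes 2}$. $p^{\mathrm{SEP}}_{\max}(|a\rangle\mapsto|b\rangle)$ denotes the maximal success probability of transforming $|a\rangle$ into $|b\rangle$ by separable operations with respect to the relevant party partition. A separable operation is one whose Kraus operators have product form over the parties, with $\sum_k M_k^\dagger M_k\le\mathbb{1}$. Its success probability is $\sum_k\|M_k|a\rangle\|^2$, summed over the branches with $M_k|a\rangle\propto|b\rangle$. *)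

theory Defs
  imports Complex_Main
begin

text \<open>n-partite pure states with local dimension D: complex amplitudes indexed by
  lists xs of length n with entries < D (computational basis).  Values outside
  this index set are irrelevant (all sums and comparisons range over idx n D).\<close>

definition idx :: "nat \<Rightarrow> nat \<Rightarrow> nat list set" where
  "idx n D = {xs. length xs = n \<and> (\<forall>x\<in>set xs. x < D)}"

type_synonym state = "nat list \<Rightarrow> complex"
type_synonym lop = "nat \<Rightarrow> nat \<Rightarrow> complex"  \<comment> \<open>local D x D matrix\<close>

definition vnorm2 :: "nat \<Rightarrow> nat \<Rightarrow> state \<Rightarrow> real" where
  "vnorm2 n D v = (\<Sum>xs\<in>idx n D. (cmod (v xs))^2)"

definition normalize_state :: "nat \<Rightarrow> nat \<Rightarrow> state \<Rightarrow> state" where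
  "normalize_state n D v = (\<lambda>xs. v xs / complex_of_real (sqrt (vnorm2 n D v)))"

definition prod_entry :: "lop list \<Rightarrow> nat list \<Rightarrow> nat list \<Rightarrow> complex" where
  "prod_entry ms xs ys = (\<Prod>i<length ms. (ms!i) (xs!i) (ys!i))"

definition prod_apply :: "nat \<Rightarrow> nat \<Rightarrow> lop list \<Rightarrow> state \<Rightarrow> state" where
  "prod_apply n D ms v = (\<lambda>xs. \<Sum>ys\<in>idx n D. prod_entry ms xs ys * v ys)"

definition invertible_lop :: "nat \<Rightarrow> lop \<Rightarrow> bool" where
  "invertible_lop D M = (\<exists>N. \<forall>i<D. \<forall>j<D.
      (\<Sum>k<D. M i k * N k j) = (if i = j then 1 else 0) \<and>
      (\<Sum>k<D. N i k * M k j) = (if i = j then 1 else 0))"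

definition unitary_prod :: "nat \<Rightarrow> nat \<Rightarrow> lop list \<Rightarrow> bool" where
  "unitary_prod n D ms = (\<forall>xs\<in>idx n D. \<forall>ys\<in>idx n D.
      (\<Sum>zs\<in>idx n D. cnj (prod_entry ms zs xs) * prod_entry ms zs ys) = (if xs = ys then 1 else 0))"

text \<open>Two-copy state a \<otimes> b regarded as n-partite state with local dimension d^2:
  party i holds the pair (x_i, y_i), encoded as x_i * d + y_i.\<close>
definition tensor2 :: "nat \<Rightarrow> state \<Rightarrow> state \<Rightarrow> state" where
  "tensor2 d a b = (\<lambda>zs. a (map (\<lambda>z. z div d) zs) * b (map (\<lambda>z. z mod d) zs))"

text \<open>Separable operation: finite family of product Kraus operators with
  \<Sum>_k M_k^dagger M_k \<le> 1, i.e. \<Sum>_k ||M_k v||^2 \<le> ||v||^2 for all v.\<close>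
definition sep_op :: "nat \<Rightarrow> nat \<Rightarrow> lop list list \<Rightarrow> bool" where
  "sep_op n D Ks = ((\<forall>ms\<in>set Ks. length ms = n) \<and>
      (\<forall>v. (\<Sum>ms\<leftarrow>Ks. vnorm2 n D (prod_apply n D ms v)) \<le> vnorm2 n D v))"

definition succ_prob :: "nat \<Rightarrow> nat \<Rightarrow> lop list list \<Rightarrow> state \<Rightarrow> state \<Rightarrow> real" where
  "succ_prob n D Ks a b = (\<Sum>ms\<leftarrow>Ks.
      if (\<exists>c. \<forall>xs\<in>idx n D. prod_apply n D ms a xs = c * b xs)
      then vnorm2 n D (prod_apply n D ms a) else 0)"

definition pmax_sep :: "nat \<Rightarrow> nat \<Rightarrow> state \<Rightarrow> state \<Rightarrow> real" where
  "pmax_sep n D a b = Sup {succ_prob n D Ks a b | Ks. sep_op n D Ks}"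

end

theory Submission
  imports Defs "Jordan_Normal_Form.Determinant"
begin

text \<open>If every invertible local stabilizer of \<open>\<psi>\<^sup>\<otimes>\<^sup>2\<close> is unitary, then so is every invertible
  local stabilizer \<open>S\<close> of \<open>\<psi>\<close> (consider \<open>S \<otimes> 1\<close>), and moreover every local stabilizer of \<open>\<psi>\<close>
  is invertible. Hence a product Kraus operator \<open>M\<close> with \<open>M g \<psi> \<sim> \<psi>\<close> satisfies \<open>M g = \<beta> U\<close>
  with \<open>U\<close> unitary. Summing over the branches bounds the success probability of \<open>c g \<psi> \<mapsto> \<psi>\<close>
  by \<open>|c|\<^sup>2 q(g)\<close>, where \<open>q(g)\<close> is the smallest eigenvalue of \<open>g\<^sup>\<dagger> g\<close>, and the single Kraus
  operator \<open>\<surd>q(g) g\<^sup>-\<^sup>1\<close> attains the bound; so \<open>p\<^sub>m\<^sub>a\<^sub>x(g\<psi> / \<parallel>g\<psi>\<parallel> \<mapsto> \<psi>) = q(g) / \<parallel>g\<psi>\<parallel>\<^sup>2\<close>.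
  The two-copy problem is the same problem for \<open>g\<^sub>1 \<otimes> g\<^sub>2\<close> and \<open>\<psi>\<^sup>\<otimes>\<^sup>2\<close>, and both \<open>q\<close> and
  \<open>\<parallel>g\<psi>\<parallel>\<^sup>2\<close> are multiplicative under tensor products.\<close>

section \<open>Index sets\<close>

lemma idx_0: "idx 0 D = {[]}"
  by (auto simp: idx_def)

lemma idx_Suc: "idx (Suc n) D = (\<lambda>(x, xs). x # xs) ` ({..<D} \<times> idx n D)"
proof (rule Set.set_eqI)
  fix ys
  show "ys \<in> idx (Suc n) D \<longleftrightarrow> ys \<in> (\<lambda>(x, xs). x # xs) ` ({..<D} \<times> idx n D)"
    by (cases ys) (auto simp: idx_def)
qed

lemma finite_idx [simp]: "finite (idx n D)"
  by (induction n) (auto simp: idx_0 idx_Suc)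

lemma mem_idx_iff: "xs \<in> idx n D \<longleftrightarrow> length xs = n \<and> (\<forall>i<n. xs ! i < D)"
  by (auto simp: idx_def in_set_conv_nth) (metis nth_mem)

lemma idx_length: "xs \<in> idx n D \<Longrightarrow> length xs = n"
  by (simp add: idx_def)

lemma idx_nth: "xs \<in> idx n D \<Longrightarrow> i < n \<Longrightarrow> xs ! i < D"
  by (simp add: mem_idx_iff)

lemma list_update_mem_idx: "xs \<in> idx n D \<Longrightarrow> k < D \<Longrightarrow> xs[j := k] \<in> idx n D"
  unfolding idx_def by (auto dest: set_update_subset_insert[THEN subsetD])

lemma sum_idx_prod:
  "(\<Sum>xs\<in>idx n D. \<Prod>i<n. f i (xs ! i)) = (\<Prod>i<n. \<Sum>y<D. (f i y :: 'a::comm_semiring_1))"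
proof (induction n arbitrary: f)
  case 0
  then show ?case by (simp add: idx_0)
next
  case (Suc n)
  have inj: "inj_on (\<lambda>(x, xs). x # xs) ({..<D} \<times> idx n D)"
    by (auto simp: inj_on_def)
  have "(\<Sum>xs\<in>idx (Suc n) D. \<Prod>i<Suc n. f i (xs ! i))
      = (\<Sum>(x, xs)\<in>{..<D} \<times> idx n D. f 0 x * (\<Prod>i<n. f (Suc i) (xs ! i)))"
    unfolding idx_Suc sum.reindex[OF inj]
    by (simp add: case_prod_unfold prod.lessThan_Suc_shift del: prod.lessThan_Suc)
  also have "\<dots> = (\<Sum>x<D. f 0 x) * (\<Sum>xs\<in>idx n D. \<Prod>i<n. f (Suc i) (xs ! i))"
    by (simp add: sum.cartesian_product[symmetric] sum_product)
  also have "\<dots> = (\<Prod>i<Suc n. \<Sum>y<D. f i y)"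
    by (simp only: Suc.IH[of "\<lambda>i. f (Suc i)"] prod.lessThan_Suc_shift)
  finally show ?case .
qed

lemma sum_idx_delta:
  fixes f :: "nat list \<Rightarrow> 'a::semiring_1"
  assumes "e \<in> idx n D"
  shows "(\<Sum>xs\<in>idx n D. f xs * (if xs = e then 1 else 0)) = f e"
proof -
  have "(\<Sum>xs\<in>idx n D. f xs * (if xs = e then 1 else 0)) = (\<Sum>xs\<in>idx n D. if xs = e then f xs else 0)"
    by (rule sum.cong) auto
  also have "\<dots> = f e"
    using assms by (simp add: sum.delta')
  finally show ?thesis .
qed

section \<open>Product operators\<close>

definition id_lop :: lop where
  "id_lop = (\<lambda>a b. if a = b then 1 else 0)"

definition lop_mult :: "nat \<Rightarrow> lop \<Rightarrow> lop \<Rightarrow> lop" where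
  "lop_mult D A B = (\<lambda>i j. \<Sum>k<D. A i k * B k j)"

definition lops_mult :: "nat \<Rightarrow> lop list \<Rightarrow> lop list \<Rightarrow> lop list" where
  "lops_mult D ms ns = map2 (lop_mult D) ms ns"

lemma sum_id_lop_mult: "i < D \<Longrightarrow> (\<Sum>k<D. id_lop i k * f k) = f i"
  and sum_mult_id_lop: "j < D \<Longrightarrow> (\<Sum>k<D. f k * id_lop k j) = f j"
  by (simp_all add: id_lop_def if_distrib[of "\<lambda>x. x * _"] if_distrib[of "\<lambda>x. _ * x"] cong: if_cong)

lemma invertible_lop_id: "invertible_lop D id_lop"
  unfolding invertible_lop_def by (intro exI[of _ id_lop] allI impI) (simp add: sum_id_lop_mult, simp add: id_lop_def)

lemma prod_apply_cong:
  "(\<And>xs. xs \<in> idx n D \<Longrightarrow> v xs = w xs) \<Longrightarrow> prod_apply n D ms v = prod_apply n D ms w"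
  unfolding prod_apply_def by (intro ext sum.cong) auto

lemma prod_apply_cmult: "prod_apply n D ms (\<lambda>xs. c * v xs) = (\<lambda>xs. c * prod_apply n D ms v xs)"
  unfolding prod_apply_def by (simp add: sum_distrib_left mult.left_commute)

lemma prod_apply_zero: "(\<And>xs. xs \<in> idx n D \<Longrightarrow> v xs = 0) \<Longrightarrow> prod_apply n D ms v xs = 0"
  by (simp add: prod_apply_def)

lemma prod_entry_lops_mult:
  assumes "length ms = n" "length ns = n" "xs \<in> idx n D" "zs \<in> idx n D"
  shows "(\<Sum>ys\<in>idx n D. prod_entry ms xs ys * prod_entry ns ys zs) = prod_entry (lops_mult D ms ns) xs zs"
proof -
  have "(\<Sum>ys\<in>idx n D. prod_entry ms xs ys * prod_entry ns ys zs)
      = (\<Sum>ys\<in>idx n D. \<Prod>i<n. (ms ! i) (xs ! i) (ys ! i) * (ns ! i) (ys ! i) (zs ! i))"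
    using assms by (simp add: prod_entry_def prod.distrib)
  also have "\<dots> = (\<Prod>i<n. \<Sum>y<D. (ms ! i) (xs ! i) y * (ns ! i) y (zs ! i))"
    by (rule sum_idx_prod)
  finally show ?thesis
    using assms by (simp add: prod_entry_def lops_mult_def lop_mult_def)
qed

lemma prod_apply_lops_mult:
  assumes "length ms = n" "length ns = n" "xs \<in> idx n D"
  shows "prod_apply n D ms (prod_apply n D ns v) xs = prod_apply n D (lops_mult D ms ns) v xs"
proof -
  have "prod_apply n D ms (prod_apply n D ns v) xs
      = (\<Sum>zs\<in>idx n D. (\<Sum>ys\<in>idx n D. prod_entry ms xs ys * prod_entry ns ys zs) * v zs)"
    unfolding prod_apply_def sum_distrib_left sum_distrib_right mult.assoc by (rule sum.swap)
  then show ?thesis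
    using prod_entry_lops_mult[OF assms] by (simp add: prod_apply_def)
qed

lemma prod_entry_id:
  assumes "length ms = n" "\<And>i. i < n \<Longrightarrow> \<forall>a<D. \<forall>b<D. (ms ! i) a b = id_lop a b"
    and "xs \<in> idx n D" "ys \<in> idx n D"
  shows "prod_entry ms xs ys = (if xs = ys then 1 else 0)"
proof (cases "xs = ys")
  case True
  then show ?thesis
    using assms by (simp add: prod_entry_def id_lop_def idx_nth)
next
  case False
  then obtain i where i: "i < n" "xs ! i \<noteq> ys ! i"
    using assms(3,4) nth_equalityI[of xs ys] by (auto simp: idx_length)
  then have "(ms ! i) (xs ! i) (ys ! i) = 0"
    using assms by (simp add: id_lop_def idx_nth)
  then have "prod_entry ms xs ys = 0"
    unfolding prod_entry_def using i assms(1) by (auto simp: prod_zero_iff)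
  then show ?thesis
    using False by simp
qed

lemma prod_apply_id:
  assumes "length ms = n" "\<And>i. i < n \<Longrightarrow> \<forall>a<D. \<forall>b<D. (ms ! i) a b = id_lop a b"
    and "xs \<in> idx n D"
  shows "prod_apply n D ms v xs = v xs"
proof -
  have "prod_apply n D ms v xs = (\<Sum>ys\<in>idx n D. v ys * (if ys = xs then 1 else 0))"
    unfolding prod_apply_def by (intro sum.cong refl) (auto simp: prod_entry_id[OF assms(1,2,3)])
  then show ?thesis
    using sum_idx_delta[OF assms(3)] by simp
qed

lemma prod_apply_length_0: "length ms = 0 \<Longrightarrow> xs \<in> idx 0 D \<Longrightarrow> prod_apply 0 D ms v xs = v xs"
  by (simp add: prod_apply_def prod_entry_def idx_0)

text \<open>On zero parties the only product operator is the identity, hence the side condition.\<close>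
lemma obtain_cmult_prod:
  assumes "length ms = n" "n = 0 \<Longrightarrow> c = 1"
  obtains ms' where "length ms' = n" "\<And>v xs. xs \<in> idx n D \<Longrightarrow> prod_apply n D ms' v xs = c * prod_apply n D ms v xs"
proof (cases ms)
  case Nil
  then show ?thesis
    using assms that[of ms] by simp
next
  case (Cons m r)
  define ms' where "ms' = (\<lambda>i j. c * m i j) # r"
  have "prod_entry ms' xs ys = c * prod_entry ms xs ys" for xs ys
    by (simp add: prod_entry_def ms'_def Cons prod.lessThan_Suc_shift del: prod.lessThan_Suc)
  then show ?thesis
    using that[of ms'] assms(1)
    by (simp add: ms'_def Cons prod_apply_def sum_distrib_left mult.assoc)
qed

lemma obtain_prod_inverse:
  assumes "length g = n" "\<forall>i<n. invertible_lop D (g ! i)"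
  obtains h where "length h = n"
    "\<And>v xs. xs \<in> idx n D \<Longrightarrow> prod_apply n D h (prod_apply n D g v) xs = v xs"
    "\<And>v xs. xs \<in> idx n D \<Longrightarrow> prod_apply n D g (prod_apply n D h v) xs = v xs"
proof -
  have "\<forall>i\<in>{..<n}. \<exists>N. \<forall>a<D. \<forall>b<D.
      lop_mult D (g ! i) N a b = id_lop a b \<and> lop_mult D N (g ! i) a b = id_lop a b"
    using assms(2) by (simp add: invertible_lop_def lop_mult_def id_lop_def)
  then obtain F where F: "\<forall>i\<in>{..<n}. \<forall>a<D. \<forall>b<D.
      lop_mult D (g ! i) (F i) a b = id_lop a b \<and> lop_mult D (F i) (g ! i) a b = id_lop a b"
    by (rule bchoice[elim_format]) blast
  define h where "h = map F [0..<n]"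
  have "length h = n"
    by (simp add: h_def)
  moreover have "prod_apply n D h (prod_apply n D g v) xs = v xs"
    and "prod_apply n D g (prod_apply n D h v) xs = v xs" if "xs \<in> idx n D" for v xs
    using that assms(1) \<open>length h = n\<close>
    by (simp_all add: prod_apply_lops_mult prod_apply_id lops_mult_def h_def F)
  ultimately show ?thesis
    using that by blast
qed

lemma vnorm2_cong:
  "(\<And>xs. xs \<in> idx n D \<Longrightarrow> v xs = w xs) \<Longrightarrow> vnorm2 n D v = vnorm2 n D w"
  unfolding vnorm2_def by (intro sum.cong) auto

lemma vnorm2_nonneg: "0 \<le> vnorm2 n D v"
  unfolding vnorm2_def by (intro sum_nonneg) auto

lemma vnorm2_cmult: "vnorm2 n D (\<lambda>xs. c * v xs) = (cmod c)\<^sup>2 * vnorm2 n D v"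
  unfolding vnorm2_def by (simp add: norm_mult power_mult_distrib sum_distrib_left)

lemma vnorm2_eq_0_iff: "vnorm2 n D v = 0 \<longleftrightarrow> (\<forall>xs\<in>idx n D. v xs = 0)"
  unfolding vnorm2_def by (subst sum_nonneg_eq_0_iff) auto

lemma vnorm2_as_complex: "complex_of_real (vnorm2 n D v) = (\<Sum>xs\<in>idx n D. cnj (v xs) * v xs)"
  unfolding vnorm2_def by (simp only: of_real_sum complex_norm_square mult.commute)

lemma vnorm2_delta:
  assumes "e \<in> idx n D"
  shows "vnorm2 n D (\<lambda>xs. if xs = e then 1 else 0) = 1"
proof -
  have "vnorm2 n D (\<lambda>xs. if xs = e then 1 else 0) = (\<Sum>xs\<in>idx n D. if xs = e then 1 else 0)"
    unfolding vnorm2_def by (rule sum.cong) auto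
  then show ?thesis
    using assms by (simp add: sum.delta)
qed

lemma unitary_prod_vnorm2:
  assumes "unitary_prod n D S"
  shows "vnorm2 n D (prod_apply n D S u) = vnorm2 n D u"
proof -
  let ?P = "prod_entry S"
  have "complex_of_real (vnorm2 n D (prod_apply n D S u))
      = (\<Sum>xs\<in>idx n D. \<Sum>ys\<in>idx n D. \<Sum>zs\<in>idx n D. cnj (u ys) * u zs * (cnj (?P xs ys) * ?P xs zs))"
    unfolding vnorm2_as_complex prod_apply_def cnj_sum sum_product
    by (intro sum.cong refl) (simp add: mult_ac)
  also have "\<dots> = (\<Sum>ys\<in>idx n D. \<Sum>zs\<in>idx n D. cnj (u ys) * u zs * (\<Sum>xs\<in>idx n D. cnj (?P xs ys) * ?P xs zs))"
  proof -
    have "(\<Sum>xs\<in>idx n D. \<Sum>ys\<in>idx n D. \<Sum>zs\<in>idx n D. cnj (u ys) * u zs * (cnj (?P xs ys) * ?P xs zs))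
      = (\<Sum>ys\<in>idx n D. \<Sum>zs\<in>idx n D. \<Sum>xs\<in>idx n D. cnj (u ys) * u zs * (cnj (?P xs ys) * ?P xs zs))"
      by (subst sum.swap) (rule sum.cong[OF refl], rule sum.swap)
    then show ?thesis
      by (simp only: sum_distrib_left)
  qed
  also have "\<dots> = (\<Sum>ys\<in>idx n D. \<Sum>zs\<in>idx n D. cnj (u ys) * u zs * (if zs = ys then 1 else 0))"
    using assms unfolding unitary_prod_def by (intro sum.cong refl) (auto simp: eq_commute)
  also have "\<dots> = complex_of_real (vnorm2 n D u)"
    by (simp add: sum_idx_delta vnorm2_as_complex)
  finally show ?thesis
    by (simp only: of_real_eq_iff)
qed

section \<open>Two copies as one system of local dimension \<open>d\<^sup>2\<close>\<close>

definition pair_enc :: "nat \<Rightarrow> nat list \<Rightarrow> nat list \<Rightarrow> nat list" where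
  "pair_enc d xs ys = map2 (\<lambda>x y. x * d + y) xs ys"

definition pair_lop :: "nat \<Rightarrow> lop \<Rightarrow> lop \<Rightarrow> lop" where
  "pair_lop d A B = (\<lambda>z w. A (z div d) (w div d) * B (z mod d) (w mod d))"

definition pair_lops :: "nat \<Rightarrow> lop list \<Rightarrow> lop list \<Rightarrow> lop list" where
  "pair_lops d ms ns = map2 (pair_lop d) ms ns"

lemma length_pair_lops [simp]: "length (pair_lops d ms ns) = min (length ms) (length ns)"
  by (simp add: pair_lops_def)

lemma digit_pair_less: "x < d \<Longrightarrow> y < d \<Longrightarrow> x * d + y < d * (d::nat)"
proof -
  assume "x < d" "y < d"
  then have "x * d + y < (x + 1) * d"
    by simp
  also have "\<dots> \<le> d * d"
    using \<open>x < d\<close> by (intro mult_right_mono) auto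
  finally show ?thesis .
qed

lemma digits_less: "z < d * d \<Longrightarrow> z div d < d \<and> z mod (d::nat) < d"
  by (cases "d = 0") (auto simp: less_mult_imp_div_less)

lemma bij_betw_digit_pair: "bij_betw (\<lambda>(a, b). a * d + b) ({..<d} \<times> {..<d}) {..<d * (d::nat)}"
  by (rule bij_betw_byWitness[where f' = "\<lambda>z. (z div d, z mod d)"])
    (auto simp: digit_pair_less digits_less)

lemma map_div_pair_enc: "xs \<in> idx n d \<Longrightarrow> ys \<in> idx n d \<Longrightarrow> map (\<lambda>z. z div d) (pair_enc d xs ys) = xs"
  by (auto simp: mem_idx_iff pair_enc_def intro!: nth_equalityI)

lemma map_mod_pair_enc: "xs \<in> idx n d \<Longrightarrow> ys \<in> idx n d \<Longrightarrow> map (\<lambda>z. z mod d) (pair_enc d xs ys) = ys"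
  by (auto simp: mem_idx_iff pair_enc_def intro!: nth_equalityI)

lemma pair_enc_mem_idx: "xs \<in> idx n d \<Longrightarrow> ys \<in> idx n d \<Longrightarrow> pair_enc d xs ys \<in> idx n (d * d)"
  by (auto simp: mem_idx_iff pair_enc_def digit_pair_less)

lemma map_div_mem_idx: "zs \<in> idx n (d * d) \<Longrightarrow> map (\<lambda>z. z div d) zs \<in> idx n d"
  and map_mod_mem_idx: "zs \<in> idx n (d * d) \<Longrightarrow> map (\<lambda>z. z mod d) zs \<in> idx n d"
  by (simp_all add: mem_idx_iff digits_less)

lemma pair_enc_map_div_mod: "pair_enc d (map (\<lambda>z. z div d) zs) (map (\<lambda>z. z mod d) zs) = zs"
  by (simp add: pair_enc_def map2_map_map)

lemma pair_enc_inj: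
  "xs \<in> idx n d \<Longrightarrow> ys \<in> idx n d \<Longrightarrow> xs' \<in> idx n d \<Longrightarrow> ys' \<in> idx n d \<Longrightarrow>
    pair_enc d xs ys = pair_enc d xs' ys' \<longleftrightarrow> xs = xs' \<and> ys = ys'"
  by (metis map_div_pair_enc map_mod_pair_enc)

lemma bij_betw_pair_enc: "bij_betw (\<lambda>(xs, ys). pair_enc d xs ys) (idx n d \<times> idx n d) (idx n (d * d))"
  by (rule bij_betw_byWitness[where f' = "\<lambda>zs. (map (\<lambda>z. z div d) zs, map (\<lambda>z. z mod d) zs)"])
    (auto simp: map_div_pair_enc map_mod_pair_enc pair_enc_mem_idx map_div_mem_idx map_mod_mem_idx
      pair_enc_map_div_mod)

lemma sum_idx_pair_enc:
  "(\<Sum>zs\<in>idx n (d * d). f zs) = (\<Sum>xs\<in>idx n d. \<Sum>ys\<in>idx n d. f (pair_enc d xs ys))"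
proof -
  have "(\<Sum>zs\<in>idx n (d * d). f zs) = (\<Sum>p\<in>idx n d \<times> idx n d. f ((\<lambda>(xs, ys). pair_enc d xs ys) p))"
    by (rule sum.reindex_bij_betw[OF bij_betw_pair_enc, symmetric])
  then show ?thesis
    by (simp add: sum.cartesian_product case_prod_unfold)
qed

lemma sum_lessThan_digit_pair:
  fixes f :: "nat \<Rightarrow> 'a::comm_monoid_add"
  shows "(\<Sum>z<d * d. f z) = (\<Sum>a<d. \<Sum>b<d. f (a * d + b))"
proof -
  have "(\<Sum>z<d * d. f z) = (\<Sum>p\<in>{..<d} \<times> {..<d}. f ((\<lambda>(a, b). a * d + b) p))"
    by (rule sum.reindex_bij_betw[OF bij_betw_digit_pair, symmetric])
  then show ?thesis
    by (simp add: sum.cartesian_product case_prod_unfold)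
qed

lemma tensor2_pair_enc: "xs \<in> idx n d \<Longrightarrow> ys \<in> idx n d \<Longrightarrow> tensor2 d a b (pair_enc d xs ys) = a xs * b ys"
  by (simp add: tensor2_def map_div_pair_enc map_mod_pair_enc)

lemma prod_entry_pair_lops:
  assumes "length ms = n" "length ns = n"
    and "xs \<in> idx n d" "ys \<in> idx n d" "xs' \<in> idx n d" "ys' \<in> idx n d"
  shows "prod_entry (pair_lops d ms ns) (pair_enc d xs ys) (pair_enc d xs' ys')
    = prod_entry ms xs xs' * prod_entry ns ys ys'"
proof -
  have "prod_entry (pair_lops d ms ns) (pair_enc d xs ys) (pair_enc d xs' ys')
      = (\<Prod>i<n. (ms ! i) (xs ! i) (xs' ! i) * (ns ! i) (ys ! i) (ys' ! i))"
    unfolding prod_entry_def using assms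
    by (intro prod.cong) (auto simp: pair_lops_def pair_lop_def pair_enc_def mem_idx_iff)
  then show ?thesis
    using assms by (simp add: prod.distrib prod_entry_def)
qed

lemma prod_apply_pair_lops:
  assumes "length ms = n" "length ns = n" "xs \<in> idx n d" "ys \<in> idx n d"
  shows "prod_apply n (d * d) (pair_lops d ms ns) u (pair_enc d xs ys)
    = (\<Sum>xs'\<in>idx n d. prod_entry ms xs xs' * (\<Sum>ys'\<in>idx n d. prod_entry ns ys ys' * u (pair_enc d xs' ys')))"
  unfolding prod_apply_def sum_idx_pair_enc
  using assms by (simp add: prod_entry_pair_lops sum_distrib_left mult.assoc)

lemma prod_apply_pair_lops_tensor2:
  assumes "length ms = n" "length ns = n" "zs \<in> idx n (d * d)"
  shows "prod_apply n (d * d) (pair_lops d ms ns) (tensor2 d a b) zs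
    = tensor2 d (prod_apply n d ms a) (prod_apply n d ns b) zs"
proof -
  obtain xs ys where xs: "xs \<in> idx n d" and ys: "ys \<in> idx n d" and zs: "zs = pair_enc d xs ys"
    using assms(3) map_div_mem_idx map_mod_mem_idx pair_enc_map_div_mod by metis
  have "prod_apply n (d * d) (pair_lops d ms ns) (tensor2 d a b) zs
      = (\<Sum>xs'\<in>idx n d. (prod_entry ms xs xs' * a xs') * (\<Sum>ys'\<in>idx n d. prod_entry ns ys ys' * b ys'))"
    unfolding zs prod_apply_pair_lops[OF assms(1,2) xs ys]
    by (intro sum.cong refl) (simp add: tensor2_pair_enc sum_distrib_left mult_ac)
  also have "\<dots> = prod_apply n d ms a xs * prod_apply n d ns b ys"
    unfolding prod_apply_def by (simp add: sum_distrib_right)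
  finally show ?thesis
    using tensor2_pair_enc[OF xs ys] zs by simp
qed

lemma vnorm2_tensor2: "vnorm2 n (d * d) (tensor2 d a b) = vnorm2 n d a * vnorm2 n d b"
  unfolding vnorm2_def sum_idx_pair_enc
  by (simp add: tensor2_pair_enc norm_mult power_mult_distrib sum_product cong: sum.cong)

lemma invertible_pair_lop:
  assumes "invertible_lop d A" "invertible_lop d B"
  shows "invertible_lop (d * d) (pair_lop d A B)"
proof -
  obtain A' B' where A': "\<forall>i<d. \<forall>j<d. (\<Sum>k<d. A i k * A' k j) = id_lop i j \<and> (\<Sum>k<d. A' i k * A k j) = id_lop i j"
    and B': "\<forall>i<d. \<forall>j<d. (\<Sum>k<d. B i k * B' k j) = id_lop i j \<and> (\<Sum>k<d. B' i k * B k j) = id_lop i j"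
    using assms by (auto simp: invertible_lop_def id_lop_def)
  have mult: "(\<Sum>k<d * d. pair_lop d M1 M2 i k * pair_lop d N1 N2 k j)
      = (\<Sum>a<d. M1 (i div d) a * N1 a (j div d)) * (\<Sum>b<d. M2 (i mod d) b * N2 b (j mod d))"
    for M1 M2 N1 N2 :: lop and i j
    unfolding sum_lessThan_digit_pair pair_lop_def by (simp add: sum_product mult_ac)
  have id: "id_lop (i div d) (j div d) * id_lop (i mod d) (j mod d) = id_lop i j" for i j
  proof -
    have "i div d = j div d \<and> i mod d = j mod d \<longleftrightarrow> i = j"
      by (metis div_mult_mod_eq)
    then show ?thesis
      by (auto simp: id_lop_def)
  qed
  show ?thesis
    unfolding invertible_lop_def
  proof (intro exI[of _ "pair_lop d A' B'"] allI impI)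
    fix i j
    assume "i < d * d" "j < d * d"
    then show "(\<Sum>k<d * d. pair_lop d A B i k * pair_lop d A' B' k j) = (if i = j then 1 else 0) \<and>
      (\<Sum>k<d * d. pair_lop d A' B' i k * pair_lop d A B k j) = (if i = j then 1 else 0)"
      using A' B' digits_less[of i d] digits_less[of j d]
      by (simp add: mult id) (simp add: id_lop_def)
  qed
qed

section \<open>Local stabilizers\<close>

definition stabilizes :: "nat \<Rightarrow> nat \<Rightarrow> lop list \<Rightarrow> state \<Rightarrow> bool" where
  "stabilizes n D S psi \<longleftrightarrow> length S = n \<and> (\<forall>xs\<in>idx n D. prod_apply n D S psi xs = psi xs)"

definition stabilizer_unitary :: "nat \<Rightarrow> nat \<Rightarrow> state \<Rightarrow> bool" where
  "stabilizer_unitary n D psi \<longleftrightarrow>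
    (\<forall>S. stabilizes n D S psi \<longrightarrow> (\<forall>i<n. invertible_lop D (S ! i)) \<longrightarrow> unitary_prod n D S)"

definition site_op :: "nat \<Rightarrow> nat \<Rightarrow> lop \<Rightarrow> lop list" where
  "site_op n j A = (replicate n id_lop)[j := A]"

lemma length_site_op [simp]: "length (site_op n j A) = n"
  by (simp add: site_op_def)

lemma prod_entry_remove:
  assumes "length ms = n" "j < n"
  shows "prod_entry ms xs ys = (ms ! j) (xs ! j) (ys ! j) * (\<Prod>i\<in>{..<n} - {j}. (ms ! i) (xs ! i) (ys ! i))"
  unfolding prod_entry_def assms(1) using assms(2) by (subst prod.remove[of _ j]) auto

lemma prod_apply_site_op:
  assumes "j < n" "xs \<in> idx n D"
  shows "prod_apply n D (site_op n j A) v xs = (\<Sum>k<D. A (xs ! j) k * v (xs[j := k]))"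
proof -
  have lx: "length xs = n"
    using assms(2) by (rule idx_length)
  have entry: "prod_entry (site_op n j A) xs ys
      = A (xs ! j) (ys ! j) * (\<Prod>i\<in>{..<n} - {j}. id_lop (xs ! i) (ys ! i))" for ys
    using assms(1) by (simp add: prod_entry_remove site_op_def)
  let ?R = "(\<lambda>k. xs[j := k]) ` {..<D}"
  have "prod_entry (site_op n j A) xs ys = 0" if ys: "ys \<in> idx n D - ?R" for ys
  proof -
    have "\<exists>i\<in>{..<n} - {j}. xs ! i \<noteq> ys ! i"
    proof (rule ccontr)
      assume "\<not> ?thesis"
      then have "ys = xs[j := ys ! j]"
        using ys lx assms(1) by (intro nth_equalityI) (auto simp: idx_length nth_list_update)
      moreover have "ys ! j < D"
        using ys assms(1) idx_nth by blast
      ultimately show False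
        using ys by blast
    qed
    then show ?thesis
      unfolding entry by (auto simp: prod_zero_iff id_lop_def)
  qed
  then have "prod_apply n D (site_op n j A) v xs = (\<Sum>ys\<in>?R. prod_entry (site_op n j A) xs ys * v ys)"
    unfolding prod_apply_def using list_update_mem_idx[OF assms(2)]
    by (intro sum.mono_neutral_right) auto
  also have "\<dots> = (\<Sum>k<D. prod_entry (site_op n j A) xs (xs[j := k]) * v (xs[j := k]))"
    using assms(1) lx by (intro sum.reindex_cong[where l = "\<lambda>k. xs[j := k]"])
      (auto simp: inj_on_def dest: arg_cong[where f = "\<lambda>ys. ys ! j"])
  also have "\<dots> = (\<Sum>k<D. A (xs ! j) k * v (xs[j := k]))"
    using assms(1) lx by (intro sum.cong refl) (simp add: entry id_lop_def nth_list_update)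
  finally show ?thesis .
qed

lemma unitary_site_op_column:
  assumes "unitary_prod n D (site_op n j A)" "j < n" "a < D"
  shows "(\<Sum>z<D. (cmod (A z a))\<^sup>2) = 1"
proof -
  let ?T = "site_op n j A"
  define e where "e = (replicate n 0)[j := a]"
  have e: "e \<in> idx n D"
    using assms(2,3) by (auto simp: e_def mem_idx_iff nth_list_update)
  have "(1::complex) = (\<Sum>zs\<in>idx n D. cnj (prod_entry ?T zs e) * prod_entry ?T zs e)"
    using assms(1) e unfolding unitary_prod_def by simp
  also have "\<dots> = (\<Prod>i<n. \<Sum>z<D. cnj ((?T ! i) z (e ! i)) * (?T ! i) z (e ! i))"
    unfolding prod_entry_def length_site_op
    by (simp add: prod.distrib[symmetric])
      (rule sum_idx_prod[where f = "\<lambda>i z. cnj ((?T ! i) z (e ! i)) * (?T ! i) z (e ! i)"])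
  also have "\<dots> = (\<Sum>z<D. cnj (A z a) * A z a)"
  proof -
    have "(\<Sum>z<D. cnj (id_lop z 0) * id_lop z 0) = (\<Sum>z<D. id_lop z 0)"
      by (intro sum.cong refl) (simp add: id_lop_def)
    also have "\<dots> = 1"
      using assms(3) by (simp add: id_lop_def)
    finally have "(\<Prod>i\<in>{..<n} - {j}. \<Sum>z<D. cnj ((?T ! i) z (e ! i)) * (?T ! i) z (e ! i)) = 1"
      by (intro prod.neutral) (simp add: site_op_def e_def)
    then show ?thesis
      using assms(2) by (subst prod.remove[of _ j]) (auto simp: site_op_def e_def)
  qed
  also have "\<dots> = complex_of_real (\<Sum>z<D. (cmod (A z a))\<^sup>2)"
    by (simp only: of_real_sum complex_norm_square mult.commute)
  finally show ?thesis
    by (metis of_real_eq_1_iff)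
qed

text \<open>Sherman--Morrison: the inverse of \<open>1 + w\<^sup>* w\<^sup>T\<close> is \<open>1 - w\<^sup>* w\<^sup>T / (1 + \<parallel>w\<parallel>\<^sup>2)\<close>.\<close>
lemma invertible_lop_rank_one_update: "invertible_lop D (\<lambda>a b. id_lop a b + cnj (w a) * w b)"
proof -
  define s where "s = (\<Sum>k<D. cnj (w k) * w k)"
  have s_eq: "1 + s = complex_of_real (1 + (\<Sum>k<D. (cmod (w k))\<^sup>2))"
    unfolding s_def by (simp only: of_real_add of_real_1 of_real_sum complex_norm_square mult.commute)
  have "0 \<le> (\<Sum>k<D. (cmod (w k))\<^sup>2)"
    by (simp add: sum_nonneg)
  then have s1: "1 + s \<noteq> 0"
    unfolding s_eq of_real_eq_0_iff by linarith
  define N :: lop where "N = (\<lambda>a b. id_lop a b - cnj (w a) * w b / (1 + s))"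
  have row: "(\<Sum>k<D. w k * N k j) = w j / (1 + s)" if "j < D" for j
  proof -
    have "(\<Sum>k<D. w k * N k j) = (\<Sum>k<D. w k * id_lop k j - (cnj (w k) * w k) * (w j / (1 + s)))"
      by (intro sum.cong refl) (simp add: N_def algebra_simps)
    also have "\<dots> = w j - s * (w j / (1 + s))"
      using that by (simp only: sum_subtractf sum_distrib_right[symmetric] sum_mult_id_lop s_def)
    finally show ?thesis
      using s1 by (simp add: field_simps)
  qed
  have col: "(\<Sum>k<D. N i k * cnj (w k)) = cnj (w i) / (1 + s)" if "i < D" for i
  proof -
    have "(\<Sum>k<D. N i k * cnj (w k)) = (\<Sum>k<D. id_lop i k * cnj (w k) - (cnj (w i) / (1 + s)) * (cnj (w k) * w k))"
      by (intro sum.cong refl) (simp add: N_def algebra_simps)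
    also have "\<dots> = cnj (w i) - (cnj (w i) / (1 + s)) * s"
      using that by (simp only: sum_subtractf sum_distrib_left[symmetric] sum_id_lop_mult s_def)
    finally show ?thesis
      using s1 by (simp add: field_simps)
  qed
  show ?thesis
    unfolding invertible_lop_def
  proof (intro exI[of _ N] allI impI conjI)
    fix i j
    assume ij: "i < D" "j < D"
    have "(\<Sum>k<D. (id_lop i k + cnj (w i) * w k) * N k j) = N i j + cnj (w i) * (\<Sum>k<D. w k * N k j)"
      using ij by (simp add: distrib_right sum.distrib sum_id_lop_mult sum_distrib_left mult.assoc)
    also have "\<dots> = id_lop i j"
      using ij by (simp add: row) (simp add: N_def)
    finally show "(\<Sum>k<D. (id_lop i k + cnj (w i) * w k) * N k j) = (if i = j then 1 else 0)"
      by (simp add: id_lop_def)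
    have "(\<Sum>k<D. N i k * (id_lop k j + cnj (w k) * w j)) = N i j + (\<Sum>k<D. N i k * cnj (w k)) * w j"
      using ij by (simp add: distrib_left sum.distrib sum_mult_id_lop sum_distrib_right mult.assoc)
    also have "\<dots> = id_lop i j"
      using ij by (simp add: col) (simp add: N_def)
    finally show "(\<Sum>k<D. N i k * (id_lop k j + cnj (w k) * w j)) = (if i = j then 1 else 0)"
      by (simp add: id_lop_def)
  qed
qed

lemma noninvertible_lop_left_null:
  assumes "\<not> invertible_lop D A"
  obtains w a where "a < D" "w a \<noteq> 0" "\<forall>l<D. (\<Sum>k<D. w k * A k l) = 0"
proof -
  define M where "M = mat D D (\<lambda>(i, j). A j i)"
  have M: "M \<in> carrier_mat D D"
    by (simp add: M_def)
  have "det M = 0"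
  proof (rule ccontr)
    assume "det M \<noteq> 0"
    then obtain B where B: "B \<in> carrier_mat D D" "B * M = 1\<^sub>m D" "M * B = 1\<^sub>m D"
      using det_non_zero_imp_unit[OF M] unfolding Units_def ring_mat_def by auto
    have "invertible_lop D A"
      unfolding invertible_lop_def
    proof (intro exI[of _ "\<lambda>k j. B $$ (j, k)"] allI impI conjI)
      fix i j
      assume ij: "i < D" "j < D"
      have "(B * M) $$ (j, i) = (if i = j then 1 else 0)" and "(M * B) $$ (j, i) = (if i = j then 1 else 0)"
        using B(2,3) ij by auto
      then show "(\<Sum>k<D. A i k * B $$ (j, k)) = (if i = j then 1 else 0)"
        and "(\<Sum>k<D. B $$ (k, i) * A k j) = (if i = j then 1 else 0)"
        using B(1) ij unfolding M_def
        by (simp_all add: times_mat_def scalar_prod_def row_def col_def mult.commute atLeast0LessThan)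
    qed
    with assms show False
      by blast
  qed
  then obtain v where v: "v \<in> carrier_vec D" "v \<noteq> 0\<^sub>v D" "M *\<^sub>v v = 0\<^sub>v D"
    using det_0_iff_vec_prod_zero[OF M] by blast
  obtain a where a: "a < D" "v $ a \<noteq> 0"
    using v(1,2) by (metis eq_vecI index_zero_vec(1,2) carrier_vecD)
  have "(\<Sum>k<D. v $ k * A k l) = 0" if "l < D" for l
  proof -
    have "(M *\<^sub>v v) $ l = 0"
      using v(3) that by simp
    then show ?thesis
      using that v(1) unfolding M_def
      by (simp add: mult_mat_vec_def scalar_prod_def row_def mult.commute atLeast0LessThan)
  qed
  then show ?thesis
    using that a by blast
qed

lemma stabilizer_left_null_contraction:
  assumes "stabilizes n D S psi" "j < n" "\<forall>l<D. (\<Sum>k<D. w k * (S ! j) k l) = 0" "xs \<in> idx n D"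
  shows "(\<Sum>k<D. w k * psi (xs[j := k])) = 0"
proof -
  have lS: "length S = n" and stab: "\<forall>xs\<in>idx n D. prod_apply n D S psi xs = psi xs"
    using assms(1) by (simp_all add: stabilizes_def)
  have lx: "length xs = n"
    using assms(4) by (rule idx_length)
  let ?Q = "\<lambda>ys. \<Prod>i\<in>{..<n} - {j}. (S ! i) (xs ! i) (ys ! i)"
  have Q: "(\<Prod>i\<in>{..<n} - {j}. (S ! i) (xs[j := k] ! i) (ys ! i)) = ?Q ys" for k ys
    by (rule prod.cong) (auto simp: lx)
  have "(\<Sum>k<D. w k * psi (xs[j := k])) = (\<Sum>k<D. w k * prod_apply n D S psi (xs[j := k]))"
    using stab list_update_mem_idx[OF assms(4)] by (intro sum.cong refl) simp
  also have "\<dots> = (\<Sum>k<D. \<Sum>ys\<in>idx n D. w k * ((S ! j) k (ys ! j) * ?Q ys * psi ys))"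
    unfolding prod_apply_def
    by (intro sum.cong refl) (simp add: sum_distrib_left prod_entry_remove[OF lS assms(2)] assms(2) lx Q)
  also have "\<dots> = (\<Sum>ys\<in>idx n D. (\<Sum>k<D. w k * (S ! j) k (ys ! j)) * (?Q ys * psi ys))"
    by (subst sum.swap) (simp add: sum_distrib_left sum_distrib_right mult_ac)
  also have "\<dots> = 0"
    using assms(2,3) by (intro sum.neutral) (auto simp: idx_nth)
  finally show ?thesis .
qed

text \<open>If a factor \<open>S\<^sub>j\<close> of a stabilizer had a left null vector \<open>w\<close>, then \<open>1 + w\<^sup>* w\<^sup>T\<close> on site \<open>j\<close>
  would be an invertible stabilizer whose column \<open>a\<close> (with \<open>w\<^sub>a \<noteq> 0\<close>) has norm larger than one.\<close>
lemma stabilizer_factors_invertible: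
  assumes "stabilizer_unitary n D psi" "stabilizes n D S psi" "j < n"
  shows "invertible_lop D (S ! j)"
proof (rule ccontr)
  assume "\<not> invertible_lop D (S ! j)"
  then obtain w a where a: "a < D" "w a \<noteq> 0" and null: "\<forall>l<D. (\<Sum>k<D. w k * (S ! j) k l) = 0"
    by (rule noninvertible_lop_left_null)
  define A where "A = (\<lambda>a b. id_lop a b + cnj (w a) * w b)"
  have "prod_apply n D (site_op n j A) psi xs = psi xs" if xs: "xs \<in> idx n D" for xs
  proof -
    have "prod_apply n D (site_op n j A) psi xs
        = (\<Sum>k<D. id_lop (xs ! j) k * psi (xs[j := k])) + cnj (w (xs ! j)) * (\<Sum>k<D. w k * psi (xs[j := k]))"
      using assms(3) xs
      by (simp add: prod_apply_site_op A_def distrib_right sum.distrib sum_distrib_left mult.assoc)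
    then show ?thesis
      using assms(3) xs idx_nth[OF xs assms(3)] idx_length[OF xs]
      by (simp add: sum_id_lop_mult stabilizer_left_null_contraction[OF assms(2,3) null])
  qed
  moreover have "\<forall>i<n. invertible_lop D (site_op n j A ! i)"
    using assms(3) by (simp add: site_op_def nth_list_update A_def invertible_lop_rank_one_update invertible_lop_id)
  ultimately have "unitary_prod n D (site_op n j A)"
    using assms(1) by (simp add: stabilizer_unitary_def stabilizes_def)
  then have "(\<Sum>z<D. (cmod (A z a))\<^sup>2) = 1"
    using assms(3) a(1) by (rule unitary_site_op_column)
  moreover have "1 < (cmod (A a a))\<^sup>2"
  proof -
    have "A a a = complex_of_real (1 + (cmod (w a))\<^sup>2)"
      unfolding A_def id_lop_def by (simp only: refl if_True of_real_add of_real_1 complex_norm_square mult.commute)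
    then have "cmod (A a a) = 1 + (cmod (w a))\<^sup>2"
      by (simp only: norm_of_real) simp
    moreover have "0 < (cmod (w a))\<^sup>2"
      using a(2) by simp
    ultimately show ?thesis
      by (simp add: one_less_power)
  qed
  moreover have "(cmod (A a a))\<^sup>2 \<le> (\<Sum>z<D. (cmod (A z a))\<^sup>2)"
    using a(1) by (intro member_le_sum) auto
  ultimately show False
    by linarith
qed

lemma stabilizer_unitary_first_copy:
  assumes "stabilizer_unitary n (d * d) (tensor2 d psi phi)"
  shows "stabilizer_unitary n d psi"
  unfolding stabilizer_unitary_def
proof (intro allI impI)
  fix S
  assume stab: "stabilizes n d S psi" and inv: "\<forall>i<n. invertible_lop d (S ! i)"
  then have lS: "length S = n"
    by (simp add: stabilizes_def)
  define S2 where "S2 = pair_lops d S (replicate n id_lop)"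
  have id: "prod_apply n d (replicate n id_lop) phi xs = phi xs" if "xs \<in> idx n d" for xs
    using that by (intro prod_apply_id) auto
  have "stabilizes n (d * d) S2 (tensor2 d psi phi)"
    unfolding stabilizes_def
  proof (intro conjI ballI)
    fix zs
    assume zs: "zs \<in> idx n (d * d)"
    then have "prod_apply n (d * d) S2 (tensor2 d psi phi) zs
        = tensor2 d (prod_apply n d S psi) (prod_apply n d (replicate n id_lop) phi) zs"
      by (simp add: S2_def prod_apply_pair_lops_tensor2 lS)
    then show "prod_apply n (d * d) S2 (tensor2 d psi phi) zs = tensor2 d psi phi zs"
      using stab id map_div_mem_idx[OF zs] map_mod_mem_idx[OF zs]
      by (simp add: tensor2_def stabilizes_def)
  qed (simp add: S2_def lS)
  moreover have "\<forall>i<n. invertible_lop (d * d) (S2 ! i)"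
    using inv lS by (simp add: S2_def pair_lops_def invertible_pair_lop invertible_lop_id)
  ultimately have U2: "unitary_prod n (d * d) S2"
    using assms by (simp add: stabilizer_unitary_def)
  show "unitary_prod n d S"
    unfolding unitary_prod_def
  proof (intro ballI)
    fix xs ys
    assume xs: "xs \<in> idx n d" and ys: "ys \<in> idx n d"
    define z0 where "z0 = replicate n (0::nat)"
    have z0: "z0 \<in> idx n d"
      using xs by (cases "n = 0") (auto simp: z0_def mem_idx_iff)
    have "(\<Sum>zs\<in>idx n d. cnj (prod_entry S zs xs) * prod_entry S zs ys)
        = (\<Sum>zs\<in>idx n d. \<Sum>zs'\<in>idx n d. cnj (prod_entry S zs xs) * prod_entry S zs ys * (if zs' = z0 then 1 else 0))"
      using z0 by (simp add: sum_idx_delta)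
    also have "\<dots> = (\<Sum>ws\<in>idx n (d * d). cnj (prod_entry S2 ws (pair_enc d xs z0)) * prod_entry S2 ws (pair_enc d ys z0))"
      unfolding sum_idx_pair_enc S2_def
      by (intro sum.cong refl) (simp add: prod_entry_pair_lops prod_entry_id lS xs ys z0)
    also have "\<dots> = (if xs = ys then 1 else 0)"
      using U2 pair_enc_mem_idx[OF xs z0] pair_enc_mem_idx[OF ys z0] pair_enc_inj[OF xs z0 ys z0]
      unfolding unitary_prod_def by simp
    finally show "(\<Sum>zs\<in>idx n d. cnj (prod_entry S zs xs) * prod_entry S zs ys) = (if xs = ys then 1 else 0)" .
  qed
qed

lemma stabilizer_multiple_vnorm2:
  assumes "stabilizer_unitary n D psi" "vnorm2 n D psi \<noteq> 0" "length P = n" "\<beta> \<noteq> 0"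
    and "\<forall>xs\<in>idx n D. prod_apply n D P psi xs = \<beta> * psi xs"
  shows "vnorm2 n D (prod_apply n D P u) = (cmod \<beta>)\<^sup>2 * vnorm2 n D u"
proof -
  have "inverse \<beta> = 1" if "n = 0"
  proof -
    have "psi [] \<noteq> 0"
      using assms(2) that by (simp add: vnorm2_def idx_0)
    moreover have "prod_apply n D P psi [] = psi []"
      using that assms(3) by (simp add: prod_apply_length_0 idx_0)
    ultimately show ?thesis
      using assms(5) that by (simp add: idx_0)
  qed
  then obtain S where lS: "length S = n"
    and S: "\<And>v xs. xs \<in> idx n D \<Longrightarrow> prod_apply n D S v xs = inverse \<beta> * prod_apply n D P v xs"
    using obtain_cmult_prod[OF assms(3)] by metis
  have "stabilizes n D S psi"
    using assms(4,5) by (simp add: stabilizes_def lS S)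
  then have "unitary_prod n D S"
    using assms(1) stabilizer_factors_invertible[OF assms(1)] by (simp add: stabilizer_unitary_def)
  have "vnorm2 n D (prod_apply n D P u) = vnorm2 n D (\<lambda>xs. \<beta> * prod_apply n D S u xs)"
    using assms(4) by (intro vnorm2_cong) (simp add: S)
  also have "\<dots> = (cmod \<beta>)\<^sup>2 * vnorm2 n D u"
    by (simp add: vnorm2_cmult unitary_prod_vnorm2[OF \<open>unitary_prod n D S\<close>])
  finally show ?thesis .
qed

section \<open>Minimal gain of a product operator\<close>

text \<open>\<open>min_gain n D g\<close> is the smallest eigenvalue of \<open>g\<^sup>\<dagger> g\<close>.\<close>
definition min_gain :: "nat \<Rightarrow> nat \<Rightarrow> lop list \<Rightarrow> real" where
  "min_gain n D g = Sup {t. \<forall>u. t * vnorm2 n D u \<le> vnorm2 n D (prod_apply n D g u)}"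

lemma le_min_gain:
  assumes "idx n D \<noteq> {}" "\<And>u. t * vnorm2 n D u \<le> vnorm2 n D (prod_apply n D g u)"
  shows "t \<le> min_gain n D g"
  unfolding min_gain_def
proof (rule cSup_upper)
  obtain e where e: "e \<in> idx n D"
    using assms(1) by blast
  let ?u = "\<lambda>xs. if xs = e then 1 else 0"
  have "s \<le> vnorm2 n D (prod_apply n D g ?u)"
    if "\<forall>u. s * vnorm2 n D u \<le> vnorm2 n D (prod_apply n D g u)" for s
    using that vnorm2_delta[OF e] by (metis mult.right_neutral)
  then show "bdd_above {t. \<forall>u. t * vnorm2 n D u \<le> vnorm2 n D (prod_apply n D g u)}"
    by (auto simp: bdd_above_def)
qed (use assms(2) in simp)

lemma min_gain_nonneg: "idx n D \<noteq> {} \<Longrightarrow> 0 \<le> min_gain n D g"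
  by (rule le_min_gain) (simp_all add: vnorm2_nonneg)

lemma min_gain_le_vnorm2: "min_gain n D g * vnorm2 n D u \<le> vnorm2 n D (prod_apply n D g u)"
proof (cases "vnorm2 n D u = 0")
  case True
  then show ?thesis
    by (simp add: vnorm2_nonneg)
next
  case False
  then have pos: "0 < vnorm2 n D u"
    using vnorm2_nonneg[of n D u] by linarith
  have "min_gain n D g \<le> vnorm2 n D (prod_apply n D g u) / vnorm2 n D u"
    unfolding min_gain_def
  proof (rule cSup_least)
    have "0 \<in> {t. \<forall>u. t * vnorm2 n D u \<le> vnorm2 n D (prod_apply n D g u)}"
      by (simp add: vnorm2_nonneg)
    then show "{t. \<forall>u. t * vnorm2 n D u \<le> vnorm2 n D (prod_apply n D g u)} \<noteq> {}"
      by blast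
  qed (use pos in \<open>auto simp: field_simps\<close>)
  then show ?thesis
    using pos by (simp add: field_simps)
qed

lemma min_gain_length_0: "length g = 0 \<Longrightarrow> min_gain 0 D g = 1"
proof -
  assume "length g = 0"
  then have id: "vnorm2 0 D (prod_apply 0 D g u) = vnorm2 0 D u" for u
    by (intro vnorm2_cong) (simp add: prod_apply_length_0)
  have "1 \<le> min_gain 0 D g"
    by (rule le_min_gain) (simp_all add: idx_0 id)
  moreover have "min_gain 0 D g \<le> 1"
    using min_gain_le_vnorm2[of 0 D g "\<lambda>xs. if xs = [] then 1 else 0"] vnorm2_delta[of "[]" 0 D]
    by (simp add: id idx_0)
  ultimately show ?thesis
    by simp
qed

lemma le_scaled_min_gain:
  assumes "idx n D \<noteq> {}" "0 \<le> s" "\<And>u. t * vnorm2 n D u \<le> s * vnorm2 n D (prod_apply n D g u)"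
  shows "t \<le> s * min_gain n D g"
proof (cases "s = 0")
  case True
  obtain e where "e \<in> idx n D"
    using assms(1) by blast
  then show ?thesis
    using True assms(3)[of "\<lambda>xs. if xs = e then 1 else 0"] by (simp add: vnorm2_delta)
next
  case False
  with assms(2) have pos: "0 < s"
    by simp
  have "t / s * vnorm2 n D u \<le> vnorm2 n D (prod_apply n D g u)" for u
    using assms(3)[of u] pos by (simp add: pos_divide_le_eq mult.commute)
  then have "t / s \<le> min_gain n D g"
    by (rule le_min_gain[OF assms(1)])
  with pos show ?thesis
    by (simp add: field_simps)
qed

lemma le_mult_min_gain:
  assumes "idx n D \<noteq> {}" "idx m E \<noteq> {}"
    and "\<And>u v. t * (vnorm2 n D u * vnorm2 m E v)
      \<le> vnorm2 n D (prod_apply n D g u) * vnorm2 m E (prod_apply m E h v)"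
  shows "t \<le> min_gain n D g * min_gain m E h"
proof -
  have "t * vnorm2 m E v \<le> vnorm2 m E (prod_apply m E h v) * min_gain n D g" for v
    using assms(1,3) vnorm2_nonneg by (intro le_scaled_min_gain) (simp_all add: mult_ac)
  then show ?thesis
    using assms(2) min_gain_nonneg[OF assms(1)] by (intro le_scaled_min_gain) (simp_all add: mult_ac)
qed

lemma mult_min_gain_le_pair_lops:
  assumes "idx n d \<noteq> {}" "length g1 = n" "length g2 = n"
  shows "min_gain n d g1 * min_gain n d g2 * vnorm2 n (d * d) u
    \<le> vnorm2 n (d * d) (prod_apply n (d * d) (pair_lops d g1 g2) u)"
proof -
  let ?q1 = "min_gain n d g1" and ?q2 = "min_gain n d g2"
  define W where "W = (\<lambda>xs' ys. prod_apply n d g2 (\<lambda>ys'. u (pair_enc d xs' ys')) ys)"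
  have apply_eq: "prod_apply n (d * d) (pair_lops d g1 g2) u (pair_enc d xs ys) = prod_apply n d g1 (\<lambda>xs'. W xs' ys) xs"
    if "xs \<in> idx n d" "ys \<in> idx n d" for xs ys
    using prod_apply_pair_lops[OF assms(2,3) that] by (simp add: W_def prod_apply_def)
  have "?q1 * ?q2 * vnorm2 n (d * d) u = ?q1 * (\<Sum>xs\<in>idx n d. ?q2 * vnorm2 n d (\<lambda>ys'. u (pair_enc d xs ys')))"
    unfolding vnorm2_def sum_idx_pair_enc by (simp add: sum_distrib_left mult.assoc)
  also have "\<dots> \<le> ?q1 * (\<Sum>xs\<in>idx n d. vnorm2 n d (prod_apply n d g2 (\<lambda>ys'. u (pair_enc d xs ys'))))"
    using min_gain_nonneg[OF assms(1)] by (intro mult_left_mono sum_mono min_gain_le_vnorm2)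
  also have "\<dots> = (\<Sum>ys\<in>idx n d. ?q1 * vnorm2 n d (\<lambda>xs'. W xs' ys))"
    unfolding vnorm2_def W_def sum_distrib_left[symmetric] by (subst sum.swap) simp
  also have "\<dots> \<le> (\<Sum>ys\<in>idx n d. vnorm2 n d (prod_apply n d g1 (\<lambda>xs'. W xs' ys)))"
    by (intro sum_mono min_gain_le_vnorm2)
  also have "\<dots> = vnorm2 n (d * d) (prod_apply n (d * d) (pair_lops d g1 g2) u)"
    unfolding vnorm2_def sum_idx_pair_enc using apply_eq by (subst sum.swap) simp
  finally show ?thesis .
qed

lemma min_gain_pair_lops:
  assumes "idx n d \<noteq> {}" "length g1 = n" "length g2 = n"
  shows "min_gain n (d * d) (pair_lops d g1 g2) = min_gain n d g1 * min_gain n d g2"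
proof (rule antisym)
  have "idx n (d * d) \<noteq> {}"
    using assms(1) pair_enc_mem_idx by blast
  then show "min_gain n d g1 * min_gain n d g2 \<le> min_gain n (d * d) (pair_lops d g1 g2)"
    using mult_min_gain_le_pair_lops[OF assms] by (intro le_min_gain)
  have "vnorm2 n (d * d) (prod_apply n (d * d) (pair_lops d g1 g2) (tensor2 d u v))
      = vnorm2 n d (prod_apply n d g1 u) * vnorm2 n d (prod_apply n d g2 v)" for u v
    using prod_apply_pair_lops_tensor2[OF assms(2,3)] by (simp add: vnorm2_cong[of n "d * d" _ "tensor2 d _ _"] vnorm2_tensor2)
  then show "min_gain n (d * d) (pair_lops d g1 g2) \<le> min_gain n d g1 * min_gain n d g2"
    using assms(1) min_gain_le_vnorm2[of n "d * d" "pair_lops d g1 g2" "tensor2 d _ _"]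
    by (intro le_mult_min_gain) (simp_all add: vnorm2_tensor2)
qed

section \<open>Optimal conversion by separable operations\<close>

lemma sep_op_Nil: "sep_op n D []"
  by (simp add: sep_op_def vnorm2_nonneg)

lemma succ_prob_le_vnorm2: "sep_op n D Ks \<Longrightarrow> succ_prob n D Ks a b \<le> vnorm2 n D a"
  unfolding succ_prob_def sep_op_def
  by (rule order_trans[OF sum_list_mono]) (auto simp: vnorm2_nonneg)

lemma bdd_above_succ_prob: "bdd_above {succ_prob n D Ks a b | Ks. sep_op n D Ks}"
  unfolding bdd_above_def using succ_prob_le_vnorm2 by blast

lemma pmax_sep_cong:
  assumes "\<And>xs. xs \<in> idx n D \<Longrightarrow> a xs = a' xs"
  shows "pmax_sep n D a b = pmax_sep n D a' b"
proof -
  have E: "prod_apply n D ms a = prod_apply n D ms a'" for ms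
    using assms by (rule prod_apply_cong)
  have "succ_prob n D Ks a b = succ_prob n D Ks a' b" for Ks
    unfolding succ_prob_def E ..
  then show ?thesis
    by (simp add: pmax_sep_def)
qed

text \<open>A branch that maps \<open>c g \<psi>\<close> to \<open>\<gamma> \<psi>\<close> is, composed with \<open>g\<close>, a multiple of a stabilizer.\<close>
lemma stabilizer_branch_vnorm2:
  assumes "stabilizer_unitary n D psi" "vnorm2 n D psi = 1" "length g = n" "length ms = n"
    and "\<forall>xs\<in>idx n D. prod_apply n D ms (\<lambda>xs. c * prod_apply n D g psi xs) xs = \<gamma> * psi xs"
  shows "(cmod \<gamma>)\<^sup>2 * vnorm2 n D u \<le> (cmod c)\<^sup>2 * vnorm2 n D (prod_apply n D ms (prod_apply n D g u))"
proof (cases "\<gamma> = 0")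
  case True
  then show ?thesis
    by (simp add: vnorm2_nonneg)
next
  case False
  obtain e where e: "e \<in> idx n D" "psi e \<noteq> 0"
    using assms(2) vnorm2_eq_0_iff[of n D psi] by auto
  have "c \<noteq> 0"
  proof
    assume "c = 0"
    then have "\<gamma> * psi e = 0"
      using assms(5) e(1) prod_apply_zero[of n D "\<lambda>_. 0" ms e] by simp
    with False e(2) show False
      by simp
  qed
  define P where "P = lops_mult D ms g"
  have P: "prod_apply n D P v xs = prod_apply n D ms (prod_apply n D g v) xs" if "xs \<in> idx n D" for v xs
    using prod_apply_lops_mult[OF assms(4,3) that] by (simp add: P_def)
  have P_psi: "\<forall>xs\<in>idx n D. prod_apply n D P psi xs = \<gamma> / c * psi xs"
  proof
    fix xs
    assume xs: "xs \<in> idx n D"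
    have "c * prod_apply n D ms (prod_apply n D g psi) xs = \<gamma> * psi xs"
      using assms(5) xs by (simp add: prod_apply_cmult)
    then show "prod_apply n D P psi xs = \<gamma> / c * psi xs"
      using \<open>c \<noteq> 0\<close> P[OF xs] by (simp add: eq_divide_eq mult.commute)
  qed
  have "(cmod \<gamma>)\<^sup>2 * vnorm2 n D u = (cmod c)\<^sup>2 * ((cmod (\<gamma> / c))\<^sup>2 * vnorm2 n D u)"
    using \<open>c \<noteq> 0\<close> by (simp add: norm_divide power_divide)
  also have "(cmod (\<gamma> / c))\<^sup>2 * vnorm2 n D u = vnorm2 n D (prod_apply n D P u)"
    by (rule stabilizer_multiple_vnorm2[OF assms(1) _ _ _ P_psi, symmetric])
      (use assms(2,3,4) False \<open>c \<noteq> 0\<close> in \<open>simp_all add: P_def lops_mult_def\<close>)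
  also have "\<dots> = vnorm2 n D (prod_apply n D ms (prod_apply n D g u))"
    by (intro vnorm2_cong) (simp add: P)
  finally show ?thesis
    by simp
qed

lemma pmax_sep_cmult_image_le:
  assumes "stabilizer_unitary n D psi" "vnorm2 n D psi = 1" "length g = n"
  shows "pmax_sep n D (\<lambda>xs. c * prod_apply n D g psi xs) psi \<le> (cmod c)\<^sup>2 * min_gain n D g"
  unfolding pmax_sep_def
proof (rule cSup_least)
  show "{succ_prob n D Ks (\<lambda>xs. c * prod_apply n D g psi xs) psi | Ks. sep_op n D Ks} \<noteq> {}"
    using sep_op_Nil by blast
next
  let ?a = "\<lambda>xs. c * prod_apply n D g psi xs"
  fix p
  assume "p \<in> {succ_prob n D Ks ?a psi | Ks. sep_op n D Ks}"
  then obtain Ks where sep: "sep_op n D Ks" and p: "p = succ_prob n D Ks ?a psi"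
    by blast
  have branch: "(if \<exists>\<gamma>. \<forall>xs\<in>idx n D. prod_apply n D ms ?a xs = \<gamma> * psi xs
        then vnorm2 n D (prod_apply n D ms ?a) else 0) * vnorm2 n D u
      \<le> (cmod c)\<^sup>2 * vnorm2 n D (prod_apply n D ms (prod_apply n D g u))" if "ms \<in> set Ks" for ms u
  proof (cases "\<exists>\<gamma>. \<forall>xs\<in>idx n D. prod_apply n D ms ?a xs = \<gamma> * psi xs")
    case True
    then obtain \<gamma> where \<gamma>: "\<forall>xs\<in>idx n D. prod_apply n D ms ?a xs = \<gamma> * psi xs"
      by blast
    have "vnorm2 n D (prod_apply n D ms ?a) = (cmod \<gamma>)\<^sup>2"
      using \<gamma> assms(2) by (simp add: vnorm2_cong[of n D _ "\<lambda>xs. \<gamma> * psi xs"] vnorm2_cmult)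
    moreover have "length ms = n"
      using sep that by (simp add: sep_op_def)
    ultimately show ?thesis
      using True stabilizer_branch_vnorm2[OF assms _ \<gamma>] by simp
  next
    case False
    then show ?thesis
      by (simp only: if_not_P[OF False] mult_zero_left) (simp add: vnorm2_nonneg)
  qed
  have "p * vnorm2 n D u \<le> (cmod c)\<^sup>2 * vnorm2 n D (prod_apply n D g u)" for u
  proof -
    have "p * vnorm2 n D u \<le> (\<Sum>ms\<leftarrow>Ks. (cmod c)\<^sup>2 * vnorm2 n D (prod_apply n D ms (prod_apply n D g u)))"
      unfolding p succ_prob_def sum_list_mult_const[symmetric] by (intro sum_list_mono branch)
    also have "\<dots> \<le> (cmod c)\<^sup>2 * vnorm2 n D (prod_apply n D g u)"
      using sep by (simp add: sum_list_const_mult sep_op_def mult_left_mono)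
    finally show ?thesis .
  qed
  moreover have "idx n D \<noteq> {}"
    using assms(2) by (auto simp: vnorm2_def)
  ultimately show "p \<le> (cmod c)\<^sup>2 * min_gain n D g"
    by (intro le_scaled_min_gain) simp_all
qed

text \<open>The bound is attained by the single Kraus operator \<open>\<surd>(min_gain g) g\<^sup>-\<^sup>1\<close>.\<close>
lemma pmax_sep_cmult_image_ge:
  assumes "vnorm2 n D psi = 1" "length g = n" "\<forall>i<n. invertible_lop D (g ! i)"
  shows "(cmod c)\<^sup>2 * min_gain n D g \<le> pmax_sep n D (\<lambda>xs. c * prod_apply n D g psi xs) psi"
proof -
  let ?a = "\<lambda>xs. c * prod_apply n D g psi xs" and ?q = "min_gain n D g"
  have q: "0 \<le> ?q"
    using assms(1) by (intro min_gain_nonneg) (auto simp: vnorm2_def)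
  obtain h where lh: "length h = n"
    and hg: "\<And>v xs. xs \<in> idx n D \<Longrightarrow> prod_apply n D h (prod_apply n D g v) xs = v xs"
    and gh: "\<And>v xs. xs \<in> idx n D \<Longrightarrow> prod_apply n D g (prod_apply n D h v) xs = v xs"
    using obtain_prod_inverse[OF assms(2,3)] by metis
  have "complex_of_real (sqrt ?q) = 1" if "n = 0"
    using that assms(2) by (simp add: min_gain_length_0)
  then obtain M where lM: "length M = n"
    and M: "\<And>v xs. xs \<in> idx n D \<Longrightarrow> prod_apply n D M v xs = sqrt ?q * prod_apply n D h v xs"
    using obtain_cmult_prod[OF lh] by metis
  have "sep_op n D [M]"
    unfolding sep_op_def
  proof (intro conjI allI)
    fix v
    have "vnorm2 n D (prod_apply n D M v) = ?q * vnorm2 n D (prod_apply n D h v)"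
      using q by (simp add: vnorm2_cong[of n D _ "\<lambda>xs. sqrt ?q * prod_apply n D h v xs"] M vnorm2_cmult)
    also have "\<dots> \<le> vnorm2 n D (prod_apply n D g (prod_apply n D h v))"
      by (rule min_gain_le_vnorm2)
    also have "\<dots> = vnorm2 n D v"
      by (intro vnorm2_cong) (simp add: gh)
    finally show "(\<Sum>ms\<leftarrow>[M]. vnorm2 n D (prod_apply n D ms v)) \<le> vnorm2 n D v"
      by simp
  qed (simp add: lM)
  moreover have "\<forall>xs\<in>idx n D. prod_apply n D M ?a xs = (c * sqrt ?q) * psi xs"
    by (simp add: M prod_apply_cmult hg)
  then have "succ_prob n D [M] ?a psi = (cmod c)\<^sup>2 * ?q"
    using assms(1) q by (auto simp: succ_prob_def vnorm2_cong[of n D _ "\<lambda>xs. (c * sqrt ?q) * psi xs"]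
        vnorm2_cmult norm_mult power_mult_distrib)
  ultimately have "(cmod c)\<^sup>2 * ?q \<in> {succ_prob n D Ks ?a psi | Ks. sep_op n D Ks}"
    by (intro CollectI exI[of _ "[M]"]) simp
  then show ?thesis
    unfolding pmax_sep_def by (rule cSup_upper[OF _ bdd_above_succ_prob])
qed

lemma pmax_sep_normalize_image:
  assumes "stabilizer_unitary n D psi" "vnorm2 n D psi = 1"
    and "length g = n" "\<forall>i<n. invertible_lop D (g ! i)"
  shows "pmax_sep n D (normalize_state n D (prod_apply n D g psi)) psi
    = min_gain n D g / vnorm2 n D (prod_apply n D g psi)"
proof -
  let ?c = "inverse (complex_of_real (sqrt (vnorm2 n D (prod_apply n D g psi))))"
  have "normalize_state n D (prod_apply n D g psi) = (\<lambda>xs. ?c * prod_apply n D g psi xs)"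
    by (simp add: normalize_state_def field_simps)
  moreover have "(cmod ?c)\<^sup>2 = 1 / vnorm2 n D (prod_apply n D g psi)"
    by (simp add: norm_inverse power_inverse vnorm2_nonneg divide_inverse)
  moreover have "pmax_sep n D (\<lambda>xs. ?c * prod_apply n D g psi xs) psi = (cmod ?c)\<^sup>2 * min_gain n D g"
    using pmax_sep_cmult_image_le[OF assms(1-3)] pmax_sep_cmult_image_ge[OF assms(2-4)] by (rule antisym)
  ultimately show ?thesis
    by simp
qed

theorem mainTheorem7:
  fixes n d :: nat and psi :: state and g1 g2 :: "lop list"
  assumes "vnorm2 n d psi = 1"
    and "\<forall>S. length S = n \<longrightarrow> (\<forall>i<n. invertible_lop (d*d) (S!i)) \<longrightarrow>
           (\<forall>xs\<in>idx n (d*d). prod_apply n (d*d) S (tensor2 d psi psi) xs = tensor2 d psi psi xs) \<longrightarrow>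
           unitary_prod n (d*d) S"
    and "length g1 = n" and "\<forall>i<n. invertible_lop d (g1!i)"
    and "length g2 = n" and "\<forall>i<n. invertible_lop d (g2!i)"
  shows "pmax_sep n (d*d)
           (tensor2 d (normalize_state n d (prod_apply n d g1 psi))
                      (normalize_state n d (prod_apply n d g2 psi)))
           (tensor2 d psi psi)
       = pmax_sep n d (normalize_state n d (prod_apply n d g1 psi)) psi
         * pmax_sep n d (normalize_state n d (prod_apply n d g2 psi)) psi"
proof -
  let ?G = "pair_lops d g1 g2" and ?Psi = "tensor2 d psi psi"
  have stab2: "stabilizer_unitary n (d * d) ?Psi"
    using assms(2) by (simp add: stabilizer_unitary_def stabilizes_def)
  then have stab1: "stabilizer_unitary n d psi"
    by (rule stabilizer_unitary_first_copy)
  have G_Psi: "prod_apply n (d * d) ?G ?Psi zs = tensor2 d (prod_apply n d g1 psi) (prod_apply n d g2 psi) zs"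
    if "zs \<in> idx n (d * d)" for zs
    using assms(3,5) that by (rule prod_apply_pair_lops_tensor2)
  then have norm_G_Psi: "vnorm2 n (d * d) (prod_apply n (d * d) ?G ?Psi)
      = vnorm2 n d (prod_apply n d g1 psi) * vnorm2 n d (prod_apply n d g2 psi)"
    by (simp add: vnorm2_cong[of n "d * d" _ "tensor2 d _ _"] vnorm2_tensor2)
  have "pmax_sep n (d * d) (tensor2 d (normalize_state n d (prod_apply n d g1 psi))
      (normalize_state n d (prod_apply n d g2 psi))) ?Psi
      = pmax_sep n (d * d) (normalize_state n (d * d) (prod_apply n (d * d) ?G ?Psi)) ?Psi"
  proof (rule pmax_sep_cong)
    fix zs
    assume "zs \<in> idx n (d * d)"
    then show "tensor2 d (normalize_state n d (prod_apply n d g1 psi)) (normalize_state n d (prod_apply n d g2 psi)) zs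
        = normalize_state n (d * d) (prod_apply n (d * d) ?G ?Psi) zs"
      unfolding normalize_state_def G_Psi[OF \<open>zs \<in> idx n (d * d)\<close>] norm_G_Psi
      by (simp add: tensor2_def real_sqrt_mult)
  qed
  also have "\<dots> = min_gain n (d * d) ?G / vnorm2 n (d * d) (prod_apply n (d * d) ?G ?Psi)"
    using stab2 assms by (intro pmax_sep_normalize_image) (simp_all add: vnorm2_tensor2 invertible_pair_lop pair_lops_def)
  also have "min_gain n (d * d) ?G = min_gain n d g1 * min_gain n d g2"
    using assms(1,3,5) by (intro min_gain_pair_lops) (auto simp: vnorm2_def)
  finally show ?thesis
    using stab1 assms by (simp add: pmax_sep_normalize_image norm_G_Psi)
qed

end
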